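(* Let $\mathcal{A}\subseteq\mathcal{B}(\mathcal{H})$ be a von Neumann algebra and $P:\mathcal{A}\to\mathcal{A}$ a Markov operator with $P^2=P$ which admits a Holevo representation $P(x)=\sum_{i=1}^n\varphi_i(x)a_i$ with linearly independent normal states $\varphi_1,\dots,\varphi_n$ and linearly independent positive elements $a_1,\dots,a_n$. Then $a_1,\dots,a_n$ and $\varphi_1,\dots,\varphi_n$ are uniquely determined up to permutation.
   Context: A Markov operator is a normal completely positive unital linear map on $\mathcal{A}$ ($\mathbbm{1}\in\mathcal{A}$). A Holevo representation of $P$ is an expression $P(x)=\sum_{i=1}^n\varphi_i(x)a_i$ for all $x\in\mathcal{A}$, with normal states $\varphi_i$ on $\mathcal{A}$ and $a_i\in\mathcal{A}_+$ with $\sum_{i=1}^na_i=\mathbbm{1}$. *)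

theory Defs
  imports "HOL-Analysis.Analysis"
begin

text \<open>Complex Hilbert spaces are encoded as real Hilbert spaces ('h :: {real_inner, complete_space})
  equipped with an orthogonal complex structure J (J o J = -id, J isometric).
  Multiplication by the imaginary unit i is the map x |-> - J x, and the complex inner
  product (conjugate-linear in the first argument) is
  cinner J x y = (x \<bullet> y) + i (x \<bullet> J y).\<close>

definition complex_structure :: "('h::real_inner \<Rightarrow> 'h) \<Rightarrow> bool" where
  "complex_structure J \<longleftrightarrow> bounded_linear J \<and> (\<forall>x. J (J x) = - x) \<and> (\<forall>x y. J x \<bullet> J y = x \<bullet> y)"

definition cmul :: "('h::real_inner \<Rightarrow> 'h) \<Rightarrow> complex \<Rightarrow> 'h \<Rightarrow> 'h" where
  "cmul J c x = Re c *\<^sub>R x - Im c *\<^sub>R J x"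

definition cinner :: "('h::real_inner \<Rightarrow> 'h) \<Rightarrow> 'h \<Rightarrow> 'h \<Rightarrow> complex" where
  "cinner J x y = Complex (x \<bullet> y) (x \<bullet> J y)"

definition bop :: "('h::real_inner \<Rightarrow> 'h) \<Rightarrow> ('h \<Rightarrow> 'h) \<Rightarrow> bool" where
  "bop J T \<longleftrightarrow> bounded_linear T \<and> (\<forall>x. T (J x) = J (T x))"

definition is_adjoint :: "('h::real_inner \<Rightarrow> 'h) \<Rightarrow> ('h \<Rightarrow> 'h) \<Rightarrow> bool" where
  "is_adjoint T S \<longleftrightarrow> (\<forall>x y. T x \<bullet> y = x \<bullet> S y)"

definition commutant :: "('h::real_inner \<Rightarrow> 'h) \<Rightarrow> ('h \<Rightarrow> 'h) set \<Rightarrow> ('h \<Rightarrow> 'h) set" where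
  "commutant J A = {T. bop J T \<and> (\<forall>S\<in>A. T \<circ> S = S \<circ> T)}"

definition von_neumann_algebra :: "('h::real_inner \<Rightarrow> 'h) \<Rightarrow> ('h \<Rightarrow> 'h) set \<Rightarrow> bool" where
  "von_neumann_algebra J A \<longleftrightarrow> complex_structure J \<and> A \<subseteq> {T. bop J T}
     \<and> (\<forall>T\<in>A. \<exists>S\<in>A. is_adjoint T S) \<and> commutant J (commutant J A) = A"

definition positive_op :: "('h::real_inner \<Rightarrow> 'h) \<Rightarrow> ('h \<Rightarrow> 'h) \<Rightarrow> bool" where
  "positive_op J T \<longleftrightarrow> (\<forall>\<xi>. Im (cinner J \<xi> (T \<xi>)) = 0 \<and> Re (cinner J \<xi> (T \<xi>)) \<ge> 0)"

definition selfadjoint_part :: "('h::real_inner \<Rightarrow> 'h) set \<Rightarrow> ('h \<Rightarrow> 'h) set" where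
  "selfadjoint_part A = {T\<in>A. is_adjoint T T}"

definition op_le :: "('h::real_inner \<Rightarrow> 'h) \<Rightarrow> ('h \<Rightarrow> 'h) \<Rightarrow> ('h \<Rightarrow> 'h) \<Rightarrow> bool" where
  "op_le J S T \<longleftrightarrow> positive_op J (\<lambda>x. T x - S x)"

definition is_lub_in :: "('h::real_inner \<Rightarrow> 'h) \<Rightarrow> ('h \<Rightarrow> 'h) set \<Rightarrow> ('h \<Rightarrow> 'h) set \<Rightarrow> ('h \<Rightarrow> 'h) \<Rightarrow> bool" where
  "is_lub_in J B D s \<longleftrightarrow> s \<in> B \<and> (\<forall>d\<in>D. op_le J d s) \<and> (\<forall>t\<in>B. (\<forall>d\<in>D. op_le J d t) \<longrightarrow> op_le J s t)"

text \<open>Bounded upward-directed nonempty families of self-adjoint elements of A with supremum s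
  (i.e. bounded increasing nets).\<close>
definition monotone_net :: "('h::real_inner \<Rightarrow> 'h) \<Rightarrow> ('h \<Rightarrow> 'h) set \<Rightarrow> ('h \<Rightarrow> 'h) set \<Rightarrow> ('h \<Rightarrow> 'h) \<Rightarrow> bool" where
  "monotone_net J A D s \<longleftrightarrow> D \<noteq> {} \<and> D \<subseteq> selfadjoint_part A
     \<and> (\<forall>x\<in>D. \<forall>y\<in>D. \<exists>z\<in>D. op_le J x z \<and> op_le J y z)
     \<and> is_lub_in J (selfadjoint_part A) D s"

definition linear_functional_on :: "('h::real_inner \<Rightarrow> 'h) \<Rightarrow> ('h \<Rightarrow> 'h) set \<Rightarrow> (('h \<Rightarrow> 'h) \<Rightarrow> complex) \<Rightarrow> bool" where
  "linear_functional_on J A f \<longleftrightarrow> (\<forall>S\<in>A. \<forall>T\<in>A. f (\<lambda>x. S x + T x) = f S + f T)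
     \<and> (\<forall>c. \<forall>T\<in>A. f (\<lambda>x. cmul J c (T x)) = c * f T)"

definition linear_map_on :: "('h::real_inner \<Rightarrow> 'h) \<Rightarrow> ('h \<Rightarrow> 'h) set \<Rightarrow> (('h \<Rightarrow> 'h) \<Rightarrow> ('h \<Rightarrow> 'h)) \<Rightarrow> bool" where
  "linear_map_on J A P \<longleftrightarrow> (\<forall>S\<in>A. \<forall>T\<in>A. P (\<lambda>x. S x + T x) = (\<lambda>x. P S x + P T x))
     \<and> (\<forall>c. \<forall>T\<in>A. P (\<lambda>x. cmul J c (T x)) = (\<lambda>x. cmul J c (P T x)))"

definition normal_state :: "('h::real_inner \<Rightarrow> 'h) \<Rightarrow> ('h \<Rightarrow> 'h) set \<Rightarrow> (('h \<Rightarrow> 'h) \<Rightarrow> complex) \<Rightarrow> bool" where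
  "normal_state J A \<phi> \<longleftrightarrow> linear_functional_on J A \<phi>
     \<and> (\<forall>T\<in>A. positive_op J T \<longrightarrow> Im (\<phi> T) = 0 \<and> Re (\<phi> T) \<ge> 0)
     \<and> \<phi> id = 1
     \<and> (\<forall>D s. monotone_net J A D s \<longrightarrow> \<phi> s = complex_of_real (SUP T\<in>D. Re (\<phi> T)))"

definition matrix_positive :: "('h::real_inner \<Rightarrow> 'h) \<Rightarrow> nat \<Rightarrow> (nat \<Rightarrow> nat \<Rightarrow> ('h \<Rightarrow> 'h)) \<Rightarrow> bool" where
  "matrix_positive J n x \<longleftrightarrow> (\<forall>\<xi>::nat \<Rightarrow> 'h.
     Im (\<Sum>i<n. \<Sum>j<n. cinner J (\<xi> i) (x i j (\<xi> j))) = 0 \<and>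
     Re (\<Sum>i<n. \<Sum>j<n. cinner J (\<xi> i) (x i j (\<xi> j))) \<ge> 0)"

definition completely_positive :: "('h::real_inner \<Rightarrow> 'h) \<Rightarrow> ('h \<Rightarrow> 'h) set \<Rightarrow> (('h \<Rightarrow> 'h) \<Rightarrow> ('h \<Rightarrow> 'h)) \<Rightarrow> bool" where
  "completely_positive J A P \<longleftrightarrow> (\<forall>n x. (\<forall>i<n. \<forall>j<n. x i j \<in> A) \<longrightarrow> matrix_positive J n x
     \<longrightarrow> matrix_positive J n (\<lambda>i j. P (x i j)))"

definition markov_operator :: "('h::real_inner \<Rightarrow> 'h) \<Rightarrow> ('h \<Rightarrow> 'h) set \<Rightarrow> (('h \<Rightarrow> 'h) \<Rightarrow> ('h \<Rightarrow> 'h)) \<Rightarrow> bool" where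
  "markov_operator J A P \<longleftrightarrow> (\<forall>T\<in>A. P T \<in> A) \<and> linear_map_on J A P
     \<and> completely_positive J A P \<and> P id = id
     \<and> (\<forall>D s. monotone_net J A D s \<longrightarrow> is_lub_in J (selfadjoint_part A) (P ` D) (P s))"

definition holevo_rep :: "('h::real_inner \<Rightarrow> 'h) \<Rightarrow> ('h \<Rightarrow> 'h) set \<Rightarrow> (('h \<Rightarrow> 'h) \<Rightarrow> ('h \<Rightarrow> 'h))
    \<Rightarrow> nat \<Rightarrow> (nat \<Rightarrow> ('h \<Rightarrow> 'h) \<Rightarrow> complex) \<Rightarrow> (nat \<Rightarrow> ('h \<Rightarrow> 'h)) \<Rightarrow> bool" where
  "holevo_rep J A P n \<phi> a \<longleftrightarrow>
     (\<forall>i<n. normal_state J A (\<phi> i) \<and> a i \<in> A \<and> positive_op J (a i))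
     \<and> (\<forall>\<xi>. (\<Sum>i<n. a i \<xi>) = \<xi>)
     \<and> (\<forall>x\<in>A. \<forall>\<xi>. P x \<xi> = (\<Sum>i<n. cmul J (\<phi> i x) (a i \<xi>)))"

definition lin_indep_functionals :: "('h \<Rightarrow> 'h) set \<Rightarrow> nat \<Rightarrow> (nat \<Rightarrow> ('h \<Rightarrow> 'h) \<Rightarrow> complex) \<Rightarrow> bool" where
  "lin_indep_functionals A n \<phi> \<longleftrightarrow>
     (\<forall>c::nat \<Rightarrow> complex. (\<forall>x\<in>A. (\<Sum>i<n. c i * \<phi> i x) = 0) \<longrightarrow> (\<forall>i<n. c i = 0))"

definition lin_indep_ops :: "('h::real_inner \<Rightarrow> 'h) \<Rightarrow> nat \<Rightarrow> (nat \<Rightarrow> ('h \<Rightarrow> 'h)) \<Rightarrow> bool" where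
  "lin_indep_ops J n a \<longleftrightarrow>
     (\<forall>c::nat \<Rightarrow> complex. (\<forall>\<xi>. (\<Sum>i<n. cmul J (c i) (a i \<xi>)) = 0) \<longrightarrow> (\<forall>i<n. c i = 0))"

end

theory Submission
  imports Defs
begin

text \<open>Since P is idempotent, comparing coefficients of P(P x) and P x in the independent family
  a gives phi_i o P = phi_i, and applying this to P x = sum_j phi_j(x) a_j and using the
  independence of the states gives phi_i(a_j) = delta_ij; hence P fixes every a_j, and likewise
  every b_j. Expanding each family in the other representation yields the matrices
  C = (phi_i(b_j)) and D = (psi_k(a_i)), which are mutually inverse and entrywise nonnegative
  because states are positive on positive elements. A nonnegative matrix with nonnegative
  inverse is monomial, and as the states are unital and the b_j sum to the identity, the
  columns of C sum to one; so C is the matrix of a permutation sigma, which gives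
  b_j = a_sigma(j) and psi_j = phi_sigma(j) o P = phi_sigma(j).\<close>

section \<open>Nonnegative matrices with nonnegative inverses\<close>

lemma nonneg_inverse_support:
  fixes c d :: "nat \<Rightarrow> nat \<Rightarrow> 'a::linordered_idom"
  assumes c_nonneg: "\<forall>j<m. \<forall>i<n. 0 \<le> c j i" and d_nonneg: "\<forall>i<n. \<forall>k<m. 0 \<le> d i k"
    and cd: "\<forall>j<m. \<forall>k<m. (\<Sum>i<n. c j i * d i k) = (if j = k then 1 else 0)"
  shows nonneg_inverse_support_zero: "\<lbrakk>j < m; i < n; k < m; 0 < c j i; k \<noteq> j\<rbrakk> \<Longrightarrow> d i k = 0"
    and nonneg_inverse_support_diag: "j < m \<Longrightarrow> \<exists>i<n. 0 < c j i \<and> 0 < d i j"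
proof -
  assume j: "j < m" and i: "i < n" and k: "k < m" and pos: "0 < c j i" and "k \<noteq> j"
  then have "(\<Sum>i<n. c j i * d i k) = 0" using cd by auto
  then have "\<forall>i\<in>{..<n}. c j i * d i k = 0"
    using c_nonneg d_nonneg j k by (subst sum_nonneg_eq_0_iff[symmetric]) auto
  then show "d i k = 0" using i pos by force
next
  assume j: "j < m"
  show "\<exists>i<n. 0 < c j i \<and> 0 < d i j"
  proof (rule ccontr)
    assume "\<not> ?thesis"
    then have "\<forall>i\<in>{..<n}. c j i * d i j = 0"
      using c_nonneg d_nonneg j by (metis lessThan_iff mult_eq_0_iff order_less_le)
    then have "(\<Sum>i<n. c j i * d i j) = 0" by (intro sum.neutral) simp
    then show False using cd j by auto
  qed
qed

lemma nonneg_inverse_injection: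
  fixes c d :: "nat \<Rightarrow> nat \<Rightarrow> 'a::linordered_idom"
  assumes c_nonneg: "\<forall>j<m. \<forall>i<n. 0 \<le> c j i" and d_nonneg: "\<forall>i<n. \<forall>k<m. 0 \<le> d i k"
    and cd: "\<forall>j<m. \<forall>k<m. (\<Sum>i<n. c j i * d i k) = (if j = k then 1 else 0)"
  obtains \<sigma> where "inj_on \<sigma> {..<m}" "\<sigma> ` {..<m} \<subseteq> {..<n}"
    and "\<forall>j<m. 0 < c j (\<sigma> j) \<and> 0 < d (\<sigma> j) j"
proof
  define \<sigma> where "\<sigma> j = (SOME i. i < n \<and> 0 < c j i \<and> 0 < d i j)" for j
  have \<sigma>: "\<sigma> j < n \<and> 0 < c j (\<sigma> j) \<and> 0 < d (\<sigma> j) j" if "j < m" for j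
    unfolding \<sigma>_def using someI_ex[OF nonneg_inverse_support_diag[OF assms that]] .
  then show "\<sigma> ` {..<m} \<subseteq> {..<n}" "\<forall>j<m. 0 < c j (\<sigma> j) \<and> 0 < d (\<sigma> j) j" by auto
  show "inj_on \<sigma> {..<m}"
  proof (rule inj_onI, rule ccontr)
    fix j j' assume j: "j \<in> {..<m}" and j': "j' \<in> {..<m}" and "\<sigma> j = \<sigma> j'" "j \<noteq> j'"
    moreover have "\<sigma> j < n" "0 < c j (\<sigma> j)" using \<sigma> j by auto
    ultimately have "d (\<sigma> j) j' = 0"
      using nonneg_inverse_support_zero[OF assms, of j "\<sigma> j" j'] j j' by simp
    then show False using \<sigma> j' \<open>\<sigma> j = \<sigma> j'\<close> by fastforce
  qed
qed

lemma nonneg_inverse_monomial: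
  fixes c d :: "nat \<Rightarrow> nat \<Rightarrow> 'a::linordered_idom"
  assumes c_nonneg: "\<forall>j<m. \<forall>i<n. 0 \<le> c j i" and d_nonneg: "\<forall>i<n. \<forall>k<m. 0 \<le> d i k"
    and cd: "\<forall>j<m. \<forall>k<m. (\<Sum>i<n. c j i * d i k) = (if j = k then 1 else 0)"
    and dc: "\<forall>i<n. \<forall>l<n. (\<Sum>j<m. d i j * c j l) = (if i = l then 1 else 0)"
  shows "m = n \<and> (\<exists>\<sigma>. \<sigma> permutes {..<n} \<and> (\<forall>j<n. \<forall>i<n. i \<noteq> \<sigma> j \<longrightarrow> c j i = 0))"
proof -
  obtain \<sigma> where \<sigma>_inj: "inj_on \<sigma> {..<m}" and \<sigma>_into: "\<sigma> ` {..<m} \<subseteq> {..<n}"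
    and \<sigma>_pos: "\<forall>j<m. 0 < c j (\<sigma> j) \<and> 0 < d (\<sigma> j) j"
    using nonneg_inverse_injection[OF c_nonneg d_nonneg cd] by blast
  obtain \<tau> where \<tau>_inj: "inj_on \<tau> {..<n}" and \<tau>_into: "\<tau> ` {..<n} \<subseteq> {..<m}"
    by (rule nonneg_inverse_injection[OF d_nonneg c_nonneg dc]) blast
  have mn: "m = n"
    using card_inj_on_le[OF \<sigma>_inj \<sigma>_into] card_inj_on_le[OF \<tau>_inj \<tau>_into] by simp
  have \<sigma>_onto: "\<sigma> ` {..<n} = {..<n}"
    using endo_inj_surj[of "{..<n}" \<sigma>] \<sigma>_inj \<sigma>_into mn by simp
  define \<pi> where "\<pi> j = (if j < n then \<sigma> j else j)" for j
  have "bij_betw \<pi> {..<n} {..<n}"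
    using \<sigma>_inj \<sigma>_onto mn unfolding bij_betw_def inj_on_def \<pi>_def by (auto simp: image_def)
  then have \<pi>_perm: "\<pi> permutes {..<n}"
    by (rule bij_imp_permutes) (simp add: \<pi>_def)
  have off: "c j i = 0" if j: "j < n" and i: "i < n" and ne: "i \<noteq> \<sigma> j" for j i
  proof (rule ccontr)
    assume "c j i \<noteq> 0"
    then have pos: "0 < c j i" using c_nonneg j i mn by (simp add: order_less_le)
    obtain j' where j': "j' < n" "i = \<sigma> j'" using \<sigma>_onto i by (metis imageE lessThan_iff)
    then have "d i j' = 0"
      using nonneg_inverse_support_zero[OF c_nonneg d_nonneg cd, of j i j'] pos j i ne mn by auto
    then show False using \<sigma>_pos j' mn by auto
  qed
  show ?thesis
    using mn \<pi>_perm off by (intro conjI exI[of _ \<pi>]) (auto simp: \<pi>_def)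
qed

lemma nonneg_inverse_stochastic_permutation:
  fixes c d :: "nat \<Rightarrow> nat \<Rightarrow> 'a::linordered_idom"
  assumes c_nonneg: "\<forall>j<m. \<forall>i<n. 0 \<le> c j i" and d_nonneg: "\<forall>i<n. \<forall>k<m. 0 \<le> d i k"
    and cd: "\<forall>j<m. \<forall>k<m. (\<Sum>i<n. c j i * d i k) = (if j = k then 1 else 0)"
    and dc: "\<forall>i<n. \<forall>l<n. (\<Sum>j<m. d i j * c j l) = (if i = l then 1 else 0)"
    and column_sums: "\<forall>i<n. (\<Sum>j<m. c j i) = 1"
  shows "m = n \<and> (\<exists>\<sigma>. \<sigma> permutes {..<n} \<and> (\<forall>j<n. \<forall>i<n. c j i = (if i = \<sigma> j then 1 else 0)))"
proof -
  obtain \<sigma> where mn: "m = n" and \<sigma>: "\<sigma> permutes {..<n}"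
    and off: "\<forall>j<n. \<forall>i<n. i \<noteq> \<sigma> j \<longrightarrow> c j i = 0"
    using nonneg_inverse_monomial[OF assms(1-4)] by blast
  have diag: "c j (\<sigma> j) = 1" if j: "j < n" for j
  proof -
    have \<sigma>j: "\<sigma> j < n" using permutes_in_image[OF \<sigma>] j by simp
    have "(\<Sum>k<n. c k (\<sigma> j)) = (\<Sum>k<n. if k = j then c j (\<sigma> j) else 0)"
      using off \<sigma>j permutes_inj[OF \<sigma>] by (intro sum.cong) (auto simp: inj_eq)
    then show ?thesis using column_sums \<sigma>j j mn by simp
  qed
  show ?thesis
    using mn \<sigma> off diag by (intro conjI exI[of _ \<sigma>]) auto
qed

section \<open>Linear combinations in a von Neumann algebra\<close>

lemma cmul_one [simp]: "cmul J 1 x = x"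
  by (simp add: cmul_def)

lemma cmul_zero [simp]: "cmul J 0 x = 0"
  by (simp add: cmul_def)

lemma cmul_diff_left: "cmul J (c - d) x = cmul J c x - cmul J d x"
  by (simp add: cmul_def algebra_simps)

lemma commutant_memD:
  assumes "T \<in> commutant J X" and "R \<in> X"
  shows "T (R x) = R (T x)"
  using assms by (auto simp: commutant_def fun_eq_iff)

lemma add_mem_commutant:
  assumes X: "X \<subseteq> {T. bop J T}" and J: "linear J"
    and S: "S \<in> commutant J X" and T: "T \<in> commutant J X"
  shows "(\<lambda>x. S x + T x) \<in> commutant J X"
proof -
  have "R (S x + T x) = R (S x) + R (T x)" if "R \<in> X" for R x
    using X that by (auto simp: bop_def bounded_linear.linear linear_add)
  then have "\<forall>R\<in>X. (\<lambda>x. S x + T x) \<circ> R = R \<circ> (\<lambda>x. S x + T x)"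
    using commutant_memD[OF S] commutant_memD[OF T] by (simp add: fun_eq_iff)
  with S T show ?thesis
    unfolding commutant_def bop_def by (simp add: bounded_linear_add linear_add[OF J])
qed

lemma cmul_mem_commutant:
  assumes X: "X \<subseteq> {T. bop J T}" and J: "bounded_linear J" and T: "T \<in> commutant J X"
  shows "(\<lambda>x. cmul J c (T x)) \<in> commutant J X"
proof -
  have T_lin: "bounded_linear T" and TJ: "\<forall>x. T (J x) = J (T x)"
    using T by (auto simp: commutant_def bop_def)
  have "bounded_linear (\<lambda>x. Re c *\<^sub>R T x - Im c *\<^sub>R J (T x))"
    by (intro bounded_linear_sub bounded_linear_compose[OF bounded_linear_scaleR_right]
        bounded_linear_compose[OF J T_lin] T_lin)
  moreover have "\<forall>x. cmul J c (T (J x)) = J (cmul J c (T x))"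
    using TJ J by (simp add: cmul_def bounded_linear.linear linear_diff linear_scale)
  moreover have "R (cmul J c (T x)) = cmul J c (T (R x))" if "R \<in> X" for R x
    using X that commutant_memD[OF T that]
    by (auto simp: bop_def cmul_def bounded_linear.linear linear_diff linear_scale)
  then have "\<forall>R\<in>X. (\<lambda>x. cmul J c (T x)) \<circ> R = R \<circ> (\<lambda>x. cmul J c (T x))"
    by (simp add: fun_eq_iff)
  ultimately show ?thesis
    unfolding commutant_def bop_def by (simp add: cmul_def)
qed

lemma zero_mem_commutant:
  assumes X: "X \<subseteq> {T. bop J T}" and J: "linear J"
  shows "(\<lambda>x. 0) \<in> commutant J X"
  using X J by (auto simp: commutant_def bop_def fun_eq_iff bounded_linear.linear linear_0)

lemma von_neumann_algebra_lincomb_mem: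
  fixes k :: nat
  assumes V: "von_neumann_algebra J A" and a: "\<forall>i<k. a i \<in> A"
  shows "(\<lambda>\<xi>. \<Sum>i<k. cmul J (c i) (a i \<xi>)) \<in> A"
proof -
  define X where "X = commutant J A"
  have X: "X \<subseteq> {T. bop J T}" and A: "A = commutant J X" and J: "bounded_linear J"
    using V by (auto simp: X_def von_neumann_algebra_def commutant_def complex_structure_def)
  show ?thesis
    using a
  proof (induction k)
    case 0
    show ?case using zero_mem_commutant[OF X bounded_linear.linear[OF J]] A by simp
  next
    case (Suc k)
    then show ?case
      using add_mem_commutant[OF X bounded_linear.linear[OF J]] cmul_mem_commutant[OF X J] A
      by simp
  qed
qed

lemma linear_functional_on_lincomb:
  fixes k :: nat
  assumes V: "von_neumann_algebra J A" and f: "linear_functional_on J A f"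
    and a: "\<forall>i<k. a i \<in> A"
  shows "f (\<lambda>\<xi>. \<Sum>i<k. cmul J (c i) (a i \<xi>)) = (\<Sum>i<k. c i * f (a i))"
  using a
proof (induction k)
  case 0
  have zero: "(\<lambda>_. 0) \<in> A"
    using von_neumann_algebra_lincomb_mem[OF V, of 0] by simp
  have "\<forall>c. \<forall>T\<in>A. f (\<lambda>x. cmul J c (T x)) = c * f T"
    using f unfolding linear_functional_on_def by blast
  from bspec[OF spec[OF this, of 0] zero] show ?case by simp
next
  case (Suc k)
  then have "(\<lambda>\<xi>. \<Sum>i<k. cmul J (c i) (a i \<xi>)) \<in> A" "(\<lambda>\<xi>. cmul J (c k) (a k \<xi>)) \<in> A"
    using von_neumann_algebra_lincomb_mem[OF V, of k a c]
      von_neumann_algebra_lincomb_mem[OF V, of 1 "\<lambda>_. a k" "\<lambda>_. c k"] by auto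
  with Suc f show ?case
    unfolding linear_functional_on_def by simp
qed

section \<open>Holevo representations of idempotent Markov operators\<close>

lemma holevo_rep_apply:
  assumes "holevo_rep J A P n \<phi> a" and "x \<in> A"
  shows "P x = (\<lambda>\<xi>. \<Sum>i<n. cmul J (\<phi> i x) (a i \<xi>))"
  using assms by (auto simp: holevo_rep_def)

lemma holevo_rep_functional:
  assumes V: "von_neumann_algebra J A" and H: "holevo_rep J A P n \<phi> a"
    and f: "linear_functional_on J A f" and x: "x \<in> A"
  shows "f (P x) = (\<Sum>i<n. \<phi> i x * f (a i))"
  using H linear_functional_on_lincomb[OF V f] holevo_rep_apply[OF H x]
  by (simp add: holevo_rep_def)

lemma holevo_rep_partition_of_unity:
  assumes V: "von_neumann_algebra J A" and H: "holevo_rep J A P n \<phi> a"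
    and f: "linear_functional_on J A f"
  shows "f id = (\<Sum>i<n. f (a i))"
proof -
  have "id = (\<lambda>\<xi>. \<Sum>i<n. cmul J 1 (a i \<xi>))"
    using H by (simp add: holevo_rep_def fun_eq_iff)
  then show ?thesis
    using H linear_functional_on_lincomb[OF V f, of n a "\<lambda>_. 1"] by (simp add: holevo_rep_def)
qed

lemma lin_indep_ops_coeffs_eq:
  assumes "lin_indep_ops J n a"
    and "\<And>\<xi>. (\<Sum>i<n. cmul J (c i) (a i \<xi>)) = (\<Sum>i<n. cmul J (d i) (a i \<xi>))"
    and "i < n"
  shows "c i = d i"
proof -
  have "\<forall>\<xi>. (\<Sum>i<n. cmul J (c i - d i) (a i \<xi>)) = 0"
    using assms(2) by (simp add: cmul_diff_left sum_subtractf)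
  then show ?thesis
    using assms(1,3) unfolding lin_indep_ops_def by fastforce
qed

lemma holevo_rep_idempotent_invariant:
  assumes H: "holevo_rep J A P n \<phi> a" and indep_a: "lin_indep_ops J n a"
    and closed: "\<forall>x\<in>A. P x \<in> A" and idem: "\<forall>x\<in>A. P (P x) = P x"
    and x: "x \<in> A" and i: "i < n"
  shows "\<phi> i (P x) = \<phi> i x"
proof (rule lin_indep_ops_coeffs_eq[OF indep_a _ i])
  fix \<xi>
  have "P (P x) \<xi> = P x \<xi>" using idem x by simp
  then show "(\<Sum>i<n. cmul J (\<phi> i (P x)) (a i \<xi>)) = (\<Sum>i<n. cmul J (\<phi> i x) (a i \<xi>))"
    using holevo_rep_apply[OF H] closed x by simp
qed

lemma holevo_rep_idempotent_biorthogonal: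
  assumes V: "von_neumann_algebra J A" and H: "holevo_rep J A P n \<phi> a"
    and indep_\<phi>: "lin_indep_functionals A n \<phi>" and indep_a: "lin_indep_ops J n a"
    and closed: "\<forall>x\<in>A. P x \<in> A" and idem: "\<forall>x\<in>A. P (P x) = P x"
    and i: "i < n" and j: "j < n"
  shows "\<phi> i (a j) = (if i = j then 1 else 0)"
proof -
  define c where "c k = \<phi> i (a k) - (if i = k then 1 else 0)" for k
  have "(\<Sum>k<n. c k * \<phi> k x) = 0" if x: "x \<in> A" for x
  proof -
    have "(\<Sum>k<n. c k * \<phi> k x)
        = (\<Sum>k<n. \<phi> k x * \<phi> i (a k) - (if i = k then \<phi> k x else 0))"
      unfolding c_def by (intro sum.cong) (auto simp: algebra_simps)
    also have "\<dots> = (\<Sum>k<n. \<phi> k x * \<phi> i (a k)) - \<phi> i x"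
      using i by (simp add: sum_subtractf)
    also have "\<dots> = \<phi> i (P x) - \<phi> i x"
      using H i holevo_rep_functional[OF V H _ x] by (simp add: holevo_rep_def normal_state_def)
    also have "\<dots> = 0"
      using holevo_rep_idempotent_invariant[OF H indep_a closed idem x i] by simp
    finally show ?thesis .
  qed
  then have "c j = 0"
    using indep_\<phi> j unfolding lin_indep_functionals_def by blast
  then show ?thesis by (simp add: c_def)
qed

lemma holevo_rep_biorthogonal_fixed:
  assumes H: "holevo_rep J A P n \<phi> a"
    and bio: "\<forall>i<n. \<forall>j<n. \<phi> i (a j) = (if i = j then 1 else 0)" and j: "j < n"
  shows "P (a j) = a j"
proof -
  have "(\<Sum>i<n. cmul J (\<phi> i (a j)) (a i \<xi>)) = (\<Sum>i<n. if i = j then a i \<xi> else 0)" for \<xi>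
    using bio j by (intro sum.cong) auto
  then show ?thesis
    using H j holevo_rep_apply[OF H] by (auto simp: holevo_rep_def fun_eq_iff)
qed

lemma holevo_rep_fixed_point_eq_component:
  assumes H: "holevo_rep J A P n \<phi> a" and y: "y \<in> A" "P y = y"
    and coeffs: "\<forall>i<n. \<phi> i y = (if i = k then 1 else 0)" and k: "k < n"
  shows "y = a k"
proof -
  have "y = (\<lambda>\<xi>. \<Sum>i<n. cmul J (\<phi> i y) (a i \<xi>))"
    using holevo_rep_apply[OF H y(1)] y(2) by simp
  also have "\<dots> = (\<lambda>\<xi>. \<Sum>i<n. if i = k then a i \<xi> else 0)"
    using coeffs by (intro ext sum.cong) auto
  finally show ?thesis
    using k by (simp add: fun_eq_iff)
qed

lemma holevo_rep_state_eq:
  assumes V: "von_neumann_algebra J A"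
    and H_a: "holevo_rep J A P n \<phi> a" and H_b: "holevo_rep J A P m \<psi> b"
    and invariant: "\<phi> k (P x) = \<phi> k x" and x: "x \<in> A" and k: "k < n"
    and coeffs: "\<forall>l<m. \<phi> k (b l) = (if l = j then 1 else 0)" and j: "j < m"
  shows "\<psi> j x = \<phi> k x"
proof -
  have "\<phi> k x = (\<Sum>l<m. \<psi> l x * \<phi> k (b l))"
    using invariant holevo_rep_functional[OF V H_b _ x] H_a k
    by (simp add: holevo_rep_def normal_state_def)
  also have "\<dots> = (\<Sum>l<m. if l = j then \<psi> l x else 0)"
    using coeffs by (intro sum.cong) auto
  finally show ?thesis
    using j by simp
qed

lemma holevo_reps_transition_product:
  assumes V: "von_neumann_algebra J A"
    and H_a: "holevo_rep J A P n \<phi> a" and H_b: "holevo_rep J A P m \<psi> b"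
    and bio_b: "\<forall>i<m. \<forall>j<m. \<psi> i (b j) = (if i = j then 1 else 0)"
    and j: "j < m" and k: "k < m"
  shows "(\<Sum>i<n. Re (\<phi> i (b j)) * Re (\<psi> k (a i))) = (if j = k then 1 else 0)"
proof -
  have b_j: "b j \<in> A" and \<psi>_k: "normal_state J A (\<psi> k)"
    using H_b j k by (auto simp: holevo_rep_def)
  have real: "Im (\<phi> i (b j)) = 0" "Im (\<psi> k (a i)) = 0" if "i < n" for i
    using H_a H_b j k that by (auto simp: holevo_rep_def normal_state_def)
  have "(if k = j then 1 else 0) = \<psi> k (P (b j))"
    using bio_b holevo_rep_biorthogonal_fixed[OF H_b bio_b j] j k by simp
  also have "\<dots> = (\<Sum>i<n. \<phi> i (b j) * \<psi> k (a i))"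
    using holevo_rep_functional[OF V H_a _ b_j] \<psi>_k by (simp add: normal_state_def)
  also have "\<dots> = (\<Sum>i<n. of_real (Re (\<phi> i (b j)) * Re (\<psi> k (a i))))"
    using real by (intro sum.cong) (simp_all add: complex_eq_iff)
  finally have "(if k = j then 1 else 0)
      = complex_of_real (\<Sum>i<n. Re (\<phi> i (b j)) * Re (\<psi> k (a i)))"
    by simp
  from arg_cong[where f = Re, OF this] show ?thesis
    by auto
qed

lemma holevo_reps_transition_permutation:
  assumes V: "von_neumann_algebra J A"
    and H_a: "holevo_rep J A P n \<phi> a" and H_b: "holevo_rep J A P m \<psi> b"
    and bio_a: "\<forall>i<n. \<forall>j<n. \<phi> i (a j) = (if i = j then 1 else 0)"
    and bio_b: "\<forall>i<m. \<forall>j<m. \<psi> i (b j) = (if i = j then 1 else 0)"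
  shows "m = n \<and> (\<exists>\<sigma>. \<sigma> permutes {..<n} \<and>
           (\<forall>j<n. \<forall>i<n. \<phi> i (b j) = (if i = \<sigma> j then 1 else 0)))"
proof -
  define c where "c j i = Re (\<phi> i (b j))" for j i
  define d where "d i k = Re (\<psi> k (a i))" for i k
  have \<phi>_b: "\<phi> i (b j) = of_real (c j i)" "0 \<le> c j i" if "j < m" "i < n" for j i
    using H_a H_b that by (auto simp: c_def holevo_rep_def normal_state_def complex_eq_iff)
  have "0 \<le> d i k" if "i < n" "k < m" for i k
    using H_a H_b that by (auto simp: d_def holevo_rep_def normal_state_def)
  moreover have "\<forall>j<m. \<forall>k<m. (\<Sum>i<n. c j i * d i k) = (if j = k then 1 else 0)"
    using holevo_reps_transition_product[OF V H_a H_b bio_b] by (simp add: c_def d_def)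
  moreover have "\<forall>i<n. \<forall>l<n. (\<Sum>j<m. d i j * c j l) = (if i = l then 1 else 0)"
    using holevo_reps_transition_product[OF V H_b H_a bio_a] by (simp add: c_def d_def)
  moreover have "(\<Sum>j<m. c j i) = 1" if i: "i < n" for i
  proof -
    have "normal_state J A (\<phi> i)" using H_a i by (simp add: holevo_rep_def)
    then have "1 = (\<Sum>j<m. \<phi> i (b j))"
      using holevo_rep_partition_of_unity[OF V H_b] by (simp add: normal_state_def)
    also have "\<dots> = of_real (\<Sum>j<m. c j i)"
      using \<phi>_b(1) i by simp
    finally show ?thesis by (metis of_real_eq_1_iff)
  qed
  ultimately obtain \<sigma> where "m = n" "\<sigma> permutes {..<n}"
    and "\<forall>j<n. \<forall>i<n. c j i = (if i = \<sigma> j then 1 else 0)"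
    using nonneg_inverse_stochastic_permutation[of m n c d] \<phi>_b(2) by blast
  then show ?thesis
    using \<phi>_b(1) by (intro conjI exI[of _ \<sigma>]) auto
qed

theorem proposition9p5:
  fixes J :: "'h::{real_inner, complete_space} \<Rightarrow> 'h"
    and A :: "('h \<Rightarrow> 'h) set"
    and P :: "('h \<Rightarrow> 'h) \<Rightarrow> ('h \<Rightarrow> 'h)"
    and \<phi> \<psi> :: "nat \<Rightarrow> ('h \<Rightarrow> 'h) \<Rightarrow> complex"
    and a b :: "nat \<Rightarrow> ('h \<Rightarrow> 'h)"
    and n m :: nat
  assumes "von_neumann_algebra J A"
    and "markov_operator J A P"
    and "\<forall>x\<in>A. P (P x) = P x"
    and "holevo_rep J A P n \<phi> a" and "lin_indep_functionals A n \<phi>" and "lin_indep_ops J n a"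
    and "holevo_rep J A P m \<psi> b" and "lin_indep_functionals A m \<psi>" and "lin_indep_ops J m b"
  shows "m = n \<and> (\<exists>\<sigma>. \<sigma> permutes {..<n} \<and>
           (\<forall>i<n. b i = a (\<sigma> i) \<and> (\<forall>x\<in>A. \<psi> i x = \<phi> (\<sigma> i) x)))"
proof -
  note V = assms(1) and H_a = assms(4) and H_b = assms(7)
  have closed: "\<forall>x\<in>A. P x \<in> A"
    using assms(2) by (simp add: markov_operator_def)
  have bio_a: "\<forall>i<n. \<forall>j<n. \<phi> i (a j) = (if i = j then 1 else 0)"
    using holevo_rep_idempotent_biorthogonal[OF V H_a assms(5,6) closed assms(3)] by blast
  have bio_b: "\<forall>i<m. \<forall>j<m. \<psi> i (b j) = (if i = j then 1 else 0)"
    using holevo_rep_idempotent_biorthogonal[OF V H_b assms(8,9) closed assms(3)] by blast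
  obtain \<sigma> where mn: "m = n" and \<sigma>: "\<sigma> permutes {..<n}"
    and \<phi>_b: "\<forall>j<n. \<forall>i<n. \<phi> i (b j) = (if i = \<sigma> j then 1 else 0)"
    using holevo_reps_transition_permutation[OF V H_a H_b bio_a bio_b] by blast
  have \<sigma>_lt: "\<sigma> j < n" if "j < n" for j
    using permutes_in_image[OF \<sigma>] that by simp
  have "b j = a (\<sigma> j)" if j: "j < n" for j
    by (rule holevo_rep_fixed_point_eq_component[OF H_a])
      (use H_b holevo_rep_biorthogonal_fixed[OF H_b bio_b] \<phi>_b \<sigma>_lt j mn
        in \<open>auto simp: holevo_rep_def\<close>)
  moreover have "\<psi> j x = \<phi> (\<sigma> j) x" if j: "j < n" and x: "x \<in> A" for j x
    using holevo_rep_idempotent_invariant[OF H_a assms(6) closed assms(3) x \<sigma>_lt[OF j]]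
    by (rule holevo_rep_state_eq[OF V H_a H_b _ x \<sigma>_lt[OF j]])
      (use \<phi>_b \<sigma>_lt j mn permutes_inj[OF \<sigma>] in \<open>auto simp: inj_eq\<close>)
  ultimately show ?thesis
    using mn \<sigma> by blast
qed

end
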